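(* In Euclidean 3-space $\mathbb{R}^3$ there is a nondegenerate polyhedron $P$ with the following properties: (1) $P$ is the image of a sphere-homeomorphic simplicial complex; (2) $P$ is rigid (i.e., not flexible); (3) there is a sequence of nondegenerate polyhedra $P_n$, $n=1,2,\dots$, such that (3a) for every $n$, $P_n$ and $P$ have the same combinatorial structure; (3b) $P_n$ is flexible for every $n$; (3c) $P_n$ tends to $P$ as $n\to\infty$.
   Context: A polyhedron is a continuous mapping from a finite 2-dimensional simplicial complex $K$ into $\mathbb{R}^3$ that is affine on each simplex of $K$ (the image is also called a polyhedron). The images of vertices, edges (1-simplices) and 2-simplices of $K$ are called vertices, edges and faces of the polyhedron. A polyhedron is nondegenerate if every face is a nondegenerate triangle (its three vertices are not collinear). Two nondegenerate polyhedra have the same combinatorial structure if they are mappings from the same simplicial complex $K$. A polyhedron is flexible if it admits a continuous deformation through polyhedra on the same complex $K$ during which every face remains congruent to itself (equivalently, all edge lengths are preserved), and which is not induced by a family of isometries of $\mathbb{R}^3$ (i.e., the spatial shape changes only through changes of dihedral angles); otherwise it is rigid. Convergence $P_n\to P$ of polyhedra on the same complex $K$ means that, for a fixed enumeration of the vertices of $K$, the coordinates of each vertex of $P_n$ converge to those of the corresponding vertex of $P$ (equivalently, the points of $\mathbb{R}^{3v}$ listing all vertex coordinates converge, $v$ being the number of vertices of $K$). *)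

theory Defs
  imports "HOL-Analysis.Analysis"
begin

text \<open>A finite 2-dimensional simplicial complex K, given by its set T of 2-simplices
 (triangles), each a 3-element set of vertex labels (natural numbers). The vertices and
 edges of K are the vertices and 2-element subsets of the triangles.\<close>

definition complex2 :: "nat set set \<Rightarrow> bool" where
  "complex2 T \<longleftrightarrow> finite T \<and> T \<noteq> {} \<and> (\<forall>F\<in>T. card F = 3)"

definition verts :: "nat set set \<Rightarrow> nat set" where
  "verts T = \<Union>T"

text \<open>Standard geometric realization of K inside the space of functions nat => real
 (product topology): the union of the standard simplices spanned by the triangles.\<close>

definition realization :: "nat set set \<Rightarrow> (nat \<Rightarrow> real) set" where
  "realization T = {x. \<exists>F\<in>T. (\<forall>i. i \<notin> F \<longrightarrow> x i = 0) \<and> (\<forall>i. 0 \<le> x i) \<and> (\<Sum>i\<in>F. x i) = 1}"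

definition sphere_homeomorphic :: "nat set set \<Rightarrow> bool" where
  "sphere_homeomorphic T \<longleftrightarrow> realization T homeomorphic sphere (0::real^3) 1"

text \<open>A polyhedron on K is determined by the positions p v of the vertices v.\<close>

definition nondegenerate :: "nat set set \<Rightarrow> (nat \<Rightarrow> real^3) \<Rightarrow> bool" where
  "nondegenerate T p \<longleftrightarrow> (\<forall>F\<in>T. \<not> collinear (p ` F))"

definition flexible :: "nat set set \<Rightarrow> (nat \<Rightarrow> real^3) \<Rightarrow> bool" where
  "flexible T p \<longleftrightarrow> (\<exists>f :: real \<Rightarrow> nat \<Rightarrow> real^3.
      (\<forall>v\<in>verts T. continuous_on {0..1} (\<lambda>t. f t v)) \<and>
      (\<forall>v\<in>verts T. f 0 v = p v) \<and>
      (\<forall>t\<in>{0..1}. \<forall>F\<in>T. \<forall>a\<in>F. \<forall>b\<in>F. dist (f t a) (f t b) = dist (p a) (p b)) \<and>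
      \<not> (\<forall>t\<in>{0..1}. \<exists>g :: real^3 \<Rightarrow> real^3.
            (\<forall>x y. dist (g x) (g y) = dist x y) \<and> (\<forall>v\<in>verts T. g (p v) = f t v)))"

end

theory Submission
  imports Defs
begin

text \<open>Both poles of an octahedron are placed at the origin, so the polyhedron is a doubly covered
  cone over its four equatorial vertices, and its shape is governed by the spherical quadrilateral
  cut out on the unit sphere by the four rays to them. In the limit polyhedron the sides of this
  quadrilateral are 45, 45, 135 and 45 degrees: one side equals the sum of the other three, the
  quadrilateral is flat, and the equality case of the triangle inequality (in Gram form: two
  squared lengths of opposite sign) determines every vertex up to an isometry, so the limit is
  rigid. Lifting one equatorial vertex to height \<open>e > 0\<close> makes the long side strictly
  shorter than the sum of the others; the quadrilateral, and with it the polyhedron, then flexes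
  in a one-parameter family, and \<open>e = 1/(n+1) \<rightarrow> 0\<close> gives the sequence.\<close>

lemma norm_vector3: "norm (vector [a, b, c] :: real^3) = sqrt (a\<^sup>2 + b\<^sup>2 + c\<^sup>2)"
  unfolding norm_eq_sqrt_inner by (simp add: inner_vec_def sum_3 power2_eq_square)

lemma dist_vector3:
  "dist (vector [a, b, c] :: real^3) (vector [a', b', c']) = sqrt ((a - a')\<^sup>2 + (b - b')\<^sup>2 + (c - c')\<^sup>2)"
  unfolding dist_norm norm_eq_sqrt_inner by (simp add: inner_vec_def sum_3 power2_eq_square)

lemma continuous_on_vector3:
  assumes "continuous_on S f" "continuous_on S g" "continuous_on S h"
  shows "continuous_on S (\<lambda>x. vector [f x, g x, h x] :: real^3)"
proof -
  have eq: "(\<lambda>x. vector [f x, g x, h x] :: real^3) = (\<lambda>x. \<chi> i. if i = 1 then f x else if i = 2 then g x else h x)"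
    by (simp add: fun_eq_iff vec_eq_iff forall_3)
  show ?thesis
    unfolding eq
  proof (rule continuous_on_vec_lambda)
    show "continuous_on S (\<lambda>x. if i = 1 then f x else if i = 2 then g x else h x)" for i :: 3
      using assms by (cases "i = 1"; cases "i = 2") simp_all
  qed
qed

lemma level_set_homeomorphic_sphere:
  fixes l :: "'a::real_normed_vector \<Rightarrow> real"
  assumes cont: "continuous_on (sphere 0 1) l"
    and homog: "\<And>c x. 0 < c \<Longrightarrow> l (c *\<^sub>R x) = c * l x"
    and pos: "\<And>x. x \<noteq> 0 \<Longrightarrow> 0 < l x"
  shows "{x. l x = 1} homeomorphic sphere (0::'a) 1"
  unfolding homeomorphic_minimal
proof (rule exI[of _ "\<lambda>x. x /\<^sub>R norm x"], rule exI[of _ "\<lambda>y. y /\<^sub>R l y"], intro conjI ballI)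
  have nonzero: "x \<noteq> 0" if "l x = 1" for x
    using homog[of 2 0] that by auto
  fix x assume "x \<in> {x. l x = 1}"
  then have x: "l x = 1" "x \<noteq> 0"
    using nonzero by auto
  then show "x /\<^sub>R norm x \<in> sphere 0 1"
    by simp
  show "(x /\<^sub>R norm x) /\<^sub>R l (x /\<^sub>R norm x) = x"
    using x by (simp add: homog)
next
  fix y :: 'a assume "y \<in> sphere 0 1"
  then have y: "norm y = 1" "y \<noteq> 0"
    by auto
  then have ly: "0 < l y"
    using pos by blast
  then show "y /\<^sub>R l y \<in> {x. l x = 1}"
    by (simp add: homog)
  show "(y /\<^sub>R l y) /\<^sub>R norm (y /\<^sub>R l y) = y"
    using y ly by simp
next
  show "continuous_on {x. l x = 1} (\<lambda>x. x /\<^sub>R norm x)"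
    using homog[of 2 0] by (intro continuous_intros) auto
  show "continuous_on (sphere 0 1) (\<lambda>y. y /\<^sub>R l y)"
  proof (intro continuous_intros cont ballI)
    show "l y \<noteq> 0" if "y \<in> sphere 0 1" for y
      using pos[of y] that by fastforce
  qed
qed

definition cross_polytope :: "(real^3) set" where
  "cross_polytope = {y. \<bar>y$1\<bar> + \<bar>y$2\<bar> + \<bar>y$3\<bar> = 1}"

lemma cross_polytope_homeomorphic_sphere: "cross_polytope homeomorphic sphere (0::real^3) 1"
  unfolding cross_polytope_def
proof (rule level_set_homeomorphic_sphere)
  show "continuous_on (sphere 0 1) (\<lambda>y::real^3. \<bar>y$1\<bar> + \<bar>y$2\<bar> + \<bar>y$3\<bar>)"
    by (intro continuous_intros)
  show "\<bar>(c *\<^sub>R y)$1\<bar> + \<bar>(c *\<^sub>R y)$2\<bar> + \<bar>(c *\<^sub>R y)$3\<bar> = c * (\<bar>y$1\<bar> + \<bar>y$2\<bar> + \<bar>y$3\<bar>)"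
    if "0 < c" for c and y :: "real^3"
    using that by (simp add: abs_mult algebra_simps)
  show "0 < \<bar>y$1\<bar> + \<bar>y$2\<bar> + \<bar>y$3\<bar>" if "y \<noteq> 0" for y :: "real^3"
  proof -
    obtain i where "y$i \<noteq> 0"
      using \<open>y \<noteq> 0\<close> by (auto simp: vec_eq_iff)
    then show ?thesis
      using exhaust_3[of i] by auto
  qed
qed

text \<open>Poles 0 and 1, equator 2, 3, 4, 5 in cyclic order.\<close>

definition octahedron :: "nat set set" where
  "octahedron = {{0,2,3}, {0,4,3}, {0,2,5}, {0,4,5}, {1,2,3}, {1,4,3}, {1,2,5}, {1,4,5}}"

lemma verts_octahedron: "verts octahedron = {0,1,2,3,4,5}"
  unfolding verts_def octahedron_def by auto

text \<open>The opposite vertex pairs 0/1, 2/4 and 3/5 go to \<open>\<plusminus>e\<^sub>1, \<plusminus>e\<^sub>2, \<plusminus>e\<^sub>3\<close>;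
  barycentric coordinates become the positive and negative parts of the coordinates.\<close>

definition octahedron_to_cross :: "(nat \<Rightarrow> real) \<Rightarrow> real^3" where
  "octahedron_to_cross x = vector [x 0 - x 1, x 2 - x 4, x 3 - x 5]"

definition cross_to_octahedron :: "real^3 \<Rightarrow> nat \<Rightarrow> real" where
  "cross_to_octahedron y i =
     (if i = 0 then max (y$1) 0 else if i = 1 then max (- y$1) 0
      else if i = 2 then max (y$2) 0 else if i = 4 then max (- y$2) 0
      else if i = 3 then max (y$3) 0 else if i = 5 then max (- y$3) 0 else 0)"

lemma realization_octahedronD:
  assumes "x \<in> realization octahedron"
  shows "(\<forall>i. 0 \<le> x i) \<and> (\<forall>i>5. x i = 0) \<and> x 0 * x 1 = 0 \<and> x 2 * x 4 = 0 \<and> x 3 * x 5 = 0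
    \<and> x 0 + x 1 + x 2 + x 3 + x 4 + x 5 = 1"
proof -
  obtain F where F: "F \<in> octahedron" "\<And>i. i \<notin> F \<Longrightarrow> x i = 0" "\<forall>i. 0 \<le> x i" "(\<Sum>i\<in>F. x i) = 1"
    using assms unfolding realization_def by blast
  have "\<forall>i>5. x i = 0"
    using F(1,2) unfolding octahedron_def by auto
  moreover have "x 0 * x 1 = 0 \<and> x 2 * x 4 = 0 \<and> x 3 * x 5 = 0 \<and> x 0 + x 1 + x 2 + x 3 + x 4 + x 5 = 1"
    using F(1,4) F(2)[of 0] F(2)[of 1] F(2)[of 2] F(2)[of 3] F(2)[of 4] F(2)[of 5]
    unfolding octahedron_def by (elim insertE emptyE) simp_all
  ultimately show ?thesis
    using F(3) by blast
qed

lemma cross_to_octahedron_to_cross: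
  assumes "x \<in> realization octahedron"
  shows "octahedron_to_cross x \<in> cross_polytope \<and> cross_to_octahedron (octahedron_to_cross x) = x"
proof -
  have parts: "max (a - b) 0 = a \<and> max (- (a - b)) 0 = b \<and> \<bar>a - b\<bar> = a + b"
    if "0 \<le> a" "0 \<le> b" "a * b = 0" for a b :: real
    using that by (cases "a = 0") auto
  note x = realization_octahedronD[OF assms]
  have "cross_to_octahedron (octahedron_to_cross x) i = x i" for i
  proof -
    have "i = 0 \<or> i = 1 \<or> i = 2 \<or> i = 3 \<or> i = 4 \<or> i = 5 \<or> i > 5"
      by linarith
    then show ?thesis
      using x parts[of "x 0" "x 1"] parts[of "x 2" "x 4"] parts[of "x 3" "x 5"]
      unfolding cross_to_octahedron_def octahedron_to_cross_def by auto
  qed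
  moreover have "octahedron_to_cross x \<in> cross_polytope"
    using x parts[of "x 0" "x 1"] parts[of "x 2" "x 4"] parts[of "x 3" "x 5"]
    unfolding cross_polytope_def octahedron_to_cross_def by auto
  ultimately show ?thesis
    by auto
qed

lemma octahedron_to_cross_to_octahedron:
  assumes "y \<in> cross_polytope"
  shows "cross_to_octahedron y \<in> realization octahedron \<and> octahedron_to_cross (cross_to_octahedron y) = y"
proof
  show "octahedron_to_cross (cross_to_octahedron y) = y"
    by (simp add: octahedron_to_cross_def cross_to_octahedron_def vec_eq_iff forall_3 max_def)
  define F where
    "F = {if y$1 \<ge> 0 then 0 else 1, if y$2 \<ge> 0 then 2 else 4, if y$3 \<ge> 0 then 3 else 5::nat}"
  have "F \<in> octahedron"
    unfolding F_def octahedron_def by auto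
  moreover have "\<forall>i. i \<notin> F \<longrightarrow> cross_to_octahedron y i = 0"
    unfolding F_def cross_to_octahedron_def by auto
  moreover have "\<forall>i. 0 \<le> cross_to_octahedron y i"
    unfolding cross_to_octahedron_def by auto
  moreover have "(\<Sum>i\<in>F. cross_to_octahedron y i) = 1"
    using assms unfolding F_def cross_to_octahedron_def cross_polytope_def by auto
  ultimately show "cross_to_octahedron y \<in> realization octahedron"
    unfolding realization_def by blast
qed

lemma octahedron_sphere_homeomorphic: "sphere_homeomorphic octahedron"
proof -
  have "realization octahedron homeomorphic cross_polytope"
    unfolding homeomorphic_minimal
  proof (intro exI conjI)
    show "\<forall>x\<in>realization octahedron. octahedron_to_cross x \<in> cross_polytope
        \<and> cross_to_octahedron (octahedron_to_cross x) = x"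
      using cross_to_octahedron_to_cross by blast
    show "\<forall>y\<in>cross_polytope. cross_to_octahedron y \<in> realization octahedron
        \<and> octahedron_to_cross (cross_to_octahedron y) = y"
      using octahedron_to_cross_to_octahedron by blast
    have "continuous_on (realization octahedron) (\<lambda>x. x i)" for i
      by (rule continuous_on_subset[OF continuous_on_product_coordinates]) simp
    then show "continuous_on (realization octahedron) octahedron_to_cross"
      unfolding octahedron_to_cross_def by (intro continuous_on_vector3 continuous_on_diff)
    show "continuous_on cross_polytope cross_to_octahedron"
    proof (rule continuous_on_coordinatewise_then_product)
      show "continuous_on cross_polytope (\<lambda>y. cross_to_octahedron y i)" for i
        unfolding cross_to_octahedron_def
        by (cases "i = 0"; cases "i = 1"; cases "i = 2"; cases "i = 3"; cases "i = 4"; cases "i = 5")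
          (simp_all add: continuous_intros)
    qed
  qed
  then show ?thesis
    unfolding sphere_homeomorphic_def
    using cross_polytope_homeomorphic_sphere by (rule homeomorphic_trans)
qed

text \<open>The parameter \<open>m\<close> turns vertex 4 in the horizontal plane
  by the angle \<open>2 arctan m\<close>; vertices 3 and 5 then follow so that no edge length depends on
  \<open>m\<close>.\<close>

definition octa_pos :: "real \<Rightarrow> real \<Rightarrow> nat \<Rightarrow> real^3" where
  "octa_pos e m v =
     (if v = 2 then vector [1, 0, 0]
      else if v = 3 then vector [1, m, sqrt (1 - m\<^sup>2)]
      else if v = 4 then vector [(1 - m\<^sup>2) / (1 + m\<^sup>2), 2 * m / (1 + m\<^sup>2), 0]
      else if v = 5 then vector [1, - 1 / m, sqrt (1 + e\<^sup>2 - 1 / m\<^sup>2)]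
      else 0)"

lemma octa_pos_poles [simp]: "octa_pos e m 0 = 0" "octa_pos e m 1 = 0" "octa_pos e m (Suc 0) = 0"
  by (simp_all add: octa_pos_def)

lemma octa_pos_at_1:
  assumes "0 \<le> e"
  shows "octa_pos e 1 v =
    (if v = 2 then vector [1, 0, 0] else if v = 3 then vector [1, 1, 0]
     else if v = 4 then vector [0, 1, 0] else if v = 5 then vector [1, -1, e] else 0)"
  using assms by (simp add: octa_pos_def)

locale octa_param =
  fixes e m :: real
  assumes m_pos: "0 < m" and m_le_1: "m \<le> 1" and m_lower: "1 / m\<^sup>2 \<le> 1 + e\<^sup>2"
    \<comment> \<open>the square roots in the definition of \<open>octa_pos\<close> are of nonnegative numbers\<close>
begin

lemma octa_dists:
  "norm (octa_pos e m 2) = 1"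
  "norm (octa_pos e m 3) = sqrt 2"
  "norm (octa_pos e m 4) = 1"
  "norm (octa_pos e m 5) = sqrt (2 + e\<^sup>2)"
  "dist (octa_pos e m 2) (octa_pos e m 3) = 1"
  "dist (octa_pos e m 2) (octa_pos e m 5) = sqrt (1 + e\<^sup>2)"
  "dist (octa_pos e m 3) (octa_pos e m 4) = 1"
  "dist (octa_pos e m 4) (octa_pos e m 5) = sqrt (5 + e\<^sup>2)"
proof -
  have m: "m \<noteq> 0" "0 < 1 + m\<^sup>2"
    using m_pos by (auto simp: add_pos_nonneg)
  have sqrt3: "(sqrt (1 - m\<^sup>2))\<^sup>2 = 1 - m\<^sup>2"
    using m_pos m_le_1 by (simp add: power_le_one)
  have sqrt5: "(sqrt (1 + e\<^sup>2 - 1 / m\<^sup>2))\<^sup>2 = 1 + e\<^sup>2 - 1 / m\<^sup>2"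
    using m_lower by simp
  have "((1 - m\<^sup>2) / (1 + m\<^sup>2))\<^sup>2 + (2 * m / (1 + m\<^sup>2))\<^sup>2 = 1"
    using m by (simp add: field_simps) algebra
  moreover have "(1 - (1 - m\<^sup>2) / (1 + m\<^sup>2))\<^sup>2 + (m - 2 * m / (1 + m\<^sup>2))\<^sup>2 + (1 - m\<^sup>2) = 1"
    using m by (simp add: field_simps) algebra
  moreover have "((1 - m\<^sup>2) / u - 1)\<^sup>2 + (2 * m / u - - 1 / m)\<^sup>2 + (1 + e\<^sup>2 - 1 / m\<^sup>2) = 5 + e\<^sup>2"
    if u: "u = 1 + m\<^sup>2" for u
  proof -
    have "0 < u"
      using m u by simp
    have "((1 - m\<^sup>2) / u - 1)\<^sup>2 + (2 * m / u - - 1 / m)\<^sup>2 + (1 + e\<^sup>2 - 1 / m\<^sup>2) - (5 + e\<^sup>2)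
      = ((1 - m\<^sup>2 - u)\<^sup>2 * m\<^sup>2 + (2 * m * m + u)\<^sup>2 - u\<^sup>2 - 4 * u\<^sup>2 * m\<^sup>2) / (u\<^sup>2 * m\<^sup>2)"
      using m(1) \<open>0 < u\<close> by (simp add: field_simps power2_eq_square)
    also have "\<dots> = 0"
      using u by (simp add: algebra_simps power2_eq_square)
    finally show ?thesis
      by simp
  qed
  ultimately show
    "norm (octa_pos e m 2) = 1"
    "norm (octa_pos e m 3) = sqrt 2"
    "norm (octa_pos e m 4) = 1"
    "norm (octa_pos e m 5) = sqrt (2 + e\<^sup>2)"
    "dist (octa_pos e m 2) (octa_pos e m 3) = 1"
    "dist (octa_pos e m 2) (octa_pos e m 5) = sqrt (1 + e\<^sup>2)"
    "dist (octa_pos e m 3) (octa_pos e m 4) = 1"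
    "dist (octa_pos e m 4) (octa_pos e m 5) = sqrt (5 + e\<^sup>2)"
    using m sqrt3 sqrt5
    by (simp_all add: octa_pos_def dist_vector3 norm_vector3 power_divide)
qed

lemma octa_dist_2_4: "(dist (octa_pos e m 2) (octa_pos e m 4))\<^sup>2 = 4 * m\<^sup>2 / (1 + m\<^sup>2)"
proof -
  have "0 < 1 + m\<^sup>2"
    by (simp add: add_pos_nonneg)
  then have "(1 - (1 - m\<^sup>2) / (1 + m\<^sup>2))\<^sup>2 + (2 * m / (1 + m\<^sup>2))\<^sup>2 = 4 * m\<^sup>2 / (1 + m\<^sup>2)"
    by (simp add: field_simps) algebra
  then show ?thesis
    by (simp add: octa_pos_def dist_vector3)
qed

end

lemma octa_param_1: "0 \<le> e \<Longrightarrow> octa_param e 1"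
  by unfold_locales auto

lemma octa_face_dist_indep:
  assumes "octa_param e m" "octa_param e m'" "F \<in> octahedron" "a \<in> F" "b \<in> F"
  shows "dist (octa_pos e m a) (octa_pos e m b) = dist (octa_pos e m' a) (octa_pos e m' b)"
proof -
  interpret A: octa_param e m by fact
  interpret B: octa_param e m' by fact
  show ?thesis
    using assms(3-5) unfolding octahedron_def
    by (auto simp: A.octa_dists B.octa_dists dist_commute)
qed

lemma inner_diff_self_if_dist_eq:
  fixes x y :: "'a::real_inner"
  shows "dist x y = r \<Longrightarrow> (x - y) \<bullet> (x - y) = r\<^sup>2"
  by (metis dist_norm power2_norm_eq_inner)

lemma flat_quadrilateral:
  fixes u2 u3 u4 u5 :: "'a::real_inner"
  assumes "norm u2 = 1" "norm u3 = sqrt 2" "norm u4 = 1" "norm u5 = sqrt 2"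
    and "dist u3 u2 = 1" "dist u5 u2 = 1" "dist u3 u4 = 1" "dist u5 u4 = sqrt 5"
  shows "u2 \<bullet> u4 = 0 \<and> u3 = u2 + u4 \<and> u5 = u2 - u4"
proof -
  have n: "u2 \<bullet> u2 = 1" "u3 \<bullet> u3 = 2" "u4 \<bullet> u4 = 1" "u5 \<bullet> u5 = 2"
    using assms(1-4) by (simp_all flip: power2_norm_eq_inner)
  have "u3 \<bullet> u2 = 1" "u5 \<bullet> u2 = 1" "u3 \<bullet> u4 = 1" "u5 \<bullet> u4 = -1"
    using n assms(5-8)[THEN inner_diff_self_if_dist_eq]
    by (simp_all add: inner_diff_left inner_diff_right inner_commute)
  then have "(u3 - u2 - u4) \<bullet> (u3 - u2 - u4) = 2 * (u2 \<bullet> u4)"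
    and "(u5 - u2 + u4) \<bullet> (u5 - u2 + u4) = - 2 * (u2 \<bullet> u4)"
    using n by (simp_all add: inner_diff_left inner_diff_right inner_add_left inner_add_right
        inner_commute)
  \<comment> \<open>two nonnegative squares with opposite signs: the triangle inequality is an equality\<close>
  then have "u2 \<bullet> u4 = 0" "u3 - u2 - u4 = 0" "u5 - u2 + u4 = 0"
    by (smt (verit) inner_ge_zero inner_eq_zero_iff)+
  then show ?thesis
    by (simp add: algebra_simps)
qed

lemma eq_0_if_equidistant:
  fixes u v w :: "'a::real_inner"
  assumes "dist w u = norm u" "dist w v = norm v" "dist w (u + v) = norm (u + v)"
  shows "w = 0"
proof -
  have sphere: "w \<bullet> w = 2 * (w \<bullet> x)" if "dist w x = norm x" for x
    using inner_diff_self_if_dist_eq[OF that]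
    by (simp add: inner_diff_left inner_diff_right inner_commute power2_norm_eq_inner)
  have "w \<bullet> w = 2 * (w \<bullet> u) + 2 * (w \<bullet> v)"
    using sphere[OF assms(3)] by (simp add: inner_add_right)
  then have "w \<bullet> w = 0"
    using sphere[OF assms(1)] sphere[OF assms(2)] by simp
  then show ?thesis
    by simp
qed

lemma orthonormal_frame_isometry:
  fixes u v z x y :: "real^3"
  assumes "norm u = 1" "norm v = 1" "u \<bullet> v = 0"
  defines "g \<equiv> \<lambda>x. z + x$1 *\<^sub>R u + x$2 *\<^sub>R v + x$3 *\<^sub>R cross3 u v"
  shows "dist (g x) (g y) = dist x y"
proof -
  have uv: "u \<bullet> u = 1" "v \<bullet> v = 1" "cross3 u v \<bullet> cross3 u v = 1"
    "u \<bullet> cross3 u v = 0" "v \<bullet> cross3 u v = 0"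
    using assms norm_cross[of u v] dot_cross_self[of u v]
    by (simp_all add: inner_commute flip: power2_norm_eq_inner)
  have "g x - g y = (x$1 - y$1) *\<^sub>R u + (x$2 - y$2) *\<^sub>R v + (x$3 - y$3) *\<^sub>R cross3 u v"
    by (simp add: g_def algebra_simps)
  then have "(g x - g y) \<bullet> (g x - g y) = (x$1 - y$1)\<^sup>2 + (x$2 - y$2)\<^sup>2 + (x$3 - y$3)\<^sup>2"
    using uv assms(3)
    by (simp add: inner_add_left inner_add_right inner_commute power2_eq_square)
  also have "\<dots> = (x - y) \<bullet> (x - y)"
    by (simp add: inner_vec_def sum_3 power2_eq_square)
  finally show ?thesis
    by (simp add: dist_norm norm_eq_sqrt_inner)
qed

lemma octa_limit_congruent:
  fixes q :: "nat \<Rightarrow> real^3"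
  assumes "\<forall>F\<in>octahedron. \<forall>a\<in>F. \<forall>b\<in>F. dist (q a) (q b) = dist (octa_pos 0 1 a) (octa_pos 0 1 b)"
  shows "\<exists>g. (\<forall>x y. dist (g x) (g y) = dist x y) \<and> (\<forall>v\<in>verts octahedron. g (octa_pos 0 1 v) = q v)"
proof -
  interpret octa_param 0 1
    by (rule octa_param_1) simp
  define u where "u i = q i - q 0" for i
  have dist_u: "dist (u a) (u b) = dist (q a) (q b)" for a b
    by (simp add: u_def dist_norm)
  have edge: "dist (q a) (q b) = dist (octa_pos 0 1 a) (octa_pos 0 1 b)"
    if "F \<in> octahedron" "a \<in> F" "b \<in> F" for F a b
    using assms that by blast
  have faces: "{0,2,3} \<in> octahedron" "{0,4,3} \<in> octahedron" "{0,2,5} \<in> octahedron"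
    "{0,4,5} \<in> octahedron" "{1,2,3} \<in> octahedron" "{1,4,3} \<in> octahedron"
    by (simp_all add: octahedron_def)
  have "norm (u 2) = 1" "norm (u 3) = sqrt 2" "norm (u 4) = 1" "norm (u 5) = sqrt 2"
    using edge[OF faces(1), of 0 2] edge[OF faces(1), of 0 3]
      edge[OF faces(2), of 0 4] edge[OF faces(3), of 0 5]
    by (simp_all add: u_def octa_dists dist_norm norm_minus_commute)
  moreover have "dist (u 3) (u 2) = 1" "dist (u 5) (u 2) = 1" "dist (u 3) (u 4) = 1"
    "dist (u 5) (u 4) = sqrt 5"
    using edge[OF faces(1), of 2 3] edge[OF faces(3), of 2 5]
      edge[OF faces(2), of 3 4] edge[OF faces(4), of 4 5]
    by (simp_all add: dist_u octa_dists dist_commute)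
  moreover have apex: "dist (u 1) (u 2) = 1" "dist (u 1) (u 3) = sqrt 2" "dist (u 1) (u 4) = 1"
    using edge[OF faces(5), of 1 2] edge[OF faces(5), of 1 3] edge[OF faces(6), of 1 4]
    by (simp_all add: u_def octa_dists dist_norm norm_minus_commute)
  ultimately have frame: "u 2 \<bullet> u 4 = 0" "u 3 = u 2 + u 4" "u 5 = u 2 - u 4"
    using flat_quadrilateral by blast+
  have "u 1 = 0"
    using apex frame \<open>norm (u 2) = 1\<close> \<open>norm (u 3) = sqrt 2\<close> \<open>norm (u 4) = 1\<close>
    by (intro eq_0_if_equidistant[of "u 1" "u 2" "u 4"]) auto
  define g where "g x = q 0 + x$1 *\<^sub>R u 2 + x$2 *\<^sub>R u 4 + x$3 *\<^sub>R cross3 (u 2) (u 4)" for x :: "real^3"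
  have "\<forall>x y. dist (g x) (g y) = dist x y"
    using orthonormal_frame_isometry \<open>norm (u 2) = 1\<close> \<open>norm (u 4) = 1\<close> frame(1)
    unfolding g_def by blast
  moreover have "\<forall>v\<in>verts octahedron. g (octa_pos 0 1 v) = q v"
  proof -
    have "g (vector [a, b, 0]) = q 0 + a *\<^sub>R u 2 + b *\<^sub>R u 4" for a b
      by (simp add: g_def)
    moreover have "g 0 = q 0"
      by (simp add: g_def)
    moreover have "q 1 = q 0" "q 2 = q 0 + u 2" "q 3 = q 0 + u 2 + u 4" "q 4 = q 0 + u 4"
      "q 5 = q 0 + u 2 - u 4"
      using frame \<open>u 1 = 0\<close> by (auto simp: u_def algebra_simps)
    ultimately show ?thesis
      by (auto simp: verts_octahedron octa_pos_at_1)
  qed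
  ultimately show ?thesis
    by blast
qed

lemma octa_limit_not_flexible: "\<not> flexible octahedron (octa_pos 0 1)"
proof
  assume "flexible octahedron (octa_pos 0 1)"
  then obtain f :: "real \<Rightarrow> nat \<Rightarrow> real^3" where
    edges: "\<forall>t\<in>{0..1}. \<forall>F\<in>octahedron. \<forall>a\<in>F. \<forall>b\<in>F.
      dist (f t a) (f t b) = dist (octa_pos 0 1 a) (octa_pos 0 1 b)" and
    not_congruent: "\<not> (\<forall>t\<in>{0..1}. \<exists>g :: real^3 \<Rightarrow> real^3. (\<forall>x y. dist (g x) (g y) = dist x y) \<and>
      (\<forall>v\<in>verts octahedron. g (octa_pos 0 1 v) = f t v))"
    unfolding flexible_def by blast
  have "\<exists>g :: real^3 \<Rightarrow> real^3. (\<forall>x y. dist (g x) (g y) = dist x y) \<and> (\<forall>v\<in>verts octahedron. g (octa_pos 0 1 v) = f t v)"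
    if "t \<in> {0..1}" for t
    using edges that by (intro octa_limit_congruent) blast
  with not_congruent show False
    by blast
qed

lemma octa_param_deform:
  assumes e: "0 < e" "e \<le> 1" and s: "0 \<le> s" "s \<le> e\<^sup>2 / 4"
  shows "octa_param e (1 - s)"
proof
  have e2: "e\<^sup>2 \<le> 1"
    using e by (simp add: power_le_one)
  then show "0 < 1 - s" "1 - s \<le> 1"
    using s by linarith+
  have "(1 + e\<^sup>2) * (1 - e\<^sup>2 / 4)\<^sup>2 - 1 = e\<^sup>2 * (1/2 - 7/16 * e\<^sup>2 + (e\<^sup>2)\<^sup>2 / 16)"
    by (simp add: power2_eq_square field_simps)
  moreover have "0 \<le> e\<^sup>2 * (1/2 - 7/16 * e\<^sup>2 + (e\<^sup>2)\<^sup>2 / 16)"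
    using e2 by (intro mult_nonneg_nonneg) auto
  ultimately have "1 \<le> (1 + e\<^sup>2) * (1 - e\<^sup>2 / 4)\<^sup>2"
    by linarith
  also have "\<dots> \<le> (1 + e\<^sup>2) * (1 - s)\<^sup>2"
    using s e2 by (intro mult_left_mono power_mono) auto
  finally have "1 \<le> (1 + e\<^sup>2) * (1 - s)\<^sup>2" .
  then show "1 / (1 - s)\<^sup>2 \<le> 1 + e\<^sup>2"
    using \<open>0 < 1 - s\<close> by (simp add: divide_le_eq)
qed

lemma continuous_on_octa_pos:
  assumes "continuous_on S m" "\<And>t. t \<in> S \<Longrightarrow> m t \<noteq> 0"
  shows "continuous_on S (\<lambda>t. octa_pos e (m t) v)"
proof -
  have "1 + (m t)\<^sup>2 \<noteq> 0" for t
    using zero_le_power2[of "m t"] by linarith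
  then show ?thesis
    using assms unfolding octa_pos_def
    by (cases "v = 2"; cases "v = 3"; cases "v = 4"; cases "v = 5")
      (auto intro!: continuous_on_vector3 continuous_intros)
qed

lemma octa_flexible:
  assumes e: "0 < e" "e \<le> 1"
  shows "flexible octahedron (octa_pos e 1)"
  unfolding flexible_def
proof (intro exI conjI)
  define f where "f t = octa_pos e (1 - t * (e\<^sup>2 / 4))" for t
  have param: "octa_param e (1 - t * (e\<^sup>2 / 4))" if "t \<in> {0..1}" for t
    using that e by (intro octa_param_deform) (auto simp: mult_left_le_one_le)
  show "\<forall>v\<in>verts octahedron. continuous_on {0..1} (\<lambda>t. f t v)"
    unfolding f_def
  proof (intro ballI continuous_on_octa_pos continuous_intros)
    show "1 - t * (e\<^sup>2 / 4) \<noteq> 0" if "t \<in> {0..1}" for t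
      using octa_param.m_pos[OF param[OF that]] by simp
  qed
  show "\<forall>v\<in>verts octahedron. f 0 v = octa_pos e 1 v"
    by (simp add: f_def)
  show "\<forall>t\<in>{0..1}. \<forall>F\<in>octahedron. \<forall>a\<in>F. \<forall>b\<in>F. dist (f t a) (f t b) = dist (octa_pos e 1 a) (octa_pos e 1 b)"
    using param octa_param_1 e(1) unfolding f_def
    by (blast intro: octa_face_dist_indep less_imp_le)
  show "\<not> (\<forall>t\<in>{0..1}. \<exists>g. (\<forall>x y. dist (g x) (g y) = dist x y) \<and>
      (\<forall>v\<in>verts octahedron. g (octa_pos e 1 v) = f t v))"
  proof
    \<comment> \<open>the diagonal 2--4 is not an edge, and its length changes with \<open>m\<close>\<close>
    assume "\<forall>t\<in>{0..1}. \<exists>g. (\<forall>x y. dist (g x) (g y) = dist x y) \<and>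
      (\<forall>v\<in>verts octahedron. g (octa_pos e 1 v) = f t v)"
    moreover have "(1::real) \<in> {0..1}"
      by simp
    ultimately obtain g where "\<forall>x y. dist (g x) (g y) = dist x y"
      "\<forall>v\<in>verts octahedron. g (octa_pos e 1 v) = f 1 v"
      by blast
    then have "dist (f 1 2) (f 1 4) = dist (octa_pos e 1 2) (octa_pos e 1 4)"
      by (metis verts_octahedron insertCI)
    then have "4 * (1 - e\<^sup>2 / 4)\<^sup>2 / (1 + (1 - e\<^sup>2 / 4)\<^sup>2) = 4 * 1\<^sup>2 / (1 + 1\<^sup>2)"
      using octa_param.octa_dist_2_4[OF param[of 1]] octa_param.octa_dist_2_4[OF octa_param_1, of e]
        e(1) unfolding f_def by simp
    moreover have "x = 1" if "4 * x / (1 + x) = 4 * 1\<^sup>2 / (1 + 1\<^sup>2)" "0 \<le> x" for x :: real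
      using that by (auto simp: divide_eq_eq)
    ultimately have "(1 - e\<^sup>2 / 4)\<^sup>2 = 1"
      by simp
    moreover have "0 < 1 - e\<^sup>2 / 4" "1 - e\<^sup>2 / 4 < 1"
      using e power_le_one[of e 2] by auto
    ultimately show False
      by (simp add: power2_eq_1_iff)
  qed
qed

lemma nondegenerate_octa_pos_1:
  assumes "0 \<le> e"
  shows "nondegenerate octahedron (octa_pos e 1)"
proof -
  have noncollinear: "\<not> collinear {0, x, y}"
    if "x$1 * y$2 \<noteq> x$2 * y$1 \<or> x$1 * y$3 \<noteq> x$3 * y$1 \<or> x$2 * y$3 \<noteq> x$3 * y$2" for x y :: "real^3"
    using that unfolding collinear_lemma by auto
  show ?thesis
    unfolding nondegenerate_def octahedron_def
    using assms by (auto simp: octa_pos_at_1 intro!: noncollinear)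
qed

lemma octa_pos_tendsto:
  assumes "e \<longlonglongrightarrow> 0" "\<And>n. 0 \<le> e n"
  shows "(\<lambda>n. octa_pos (e n) 1 v) \<longlonglongrightarrow> octa_pos 0 1 v"
proof -
  have "octa_pos (e n) 1 v = octa_pos 0 1 v + (if v = 5 then e n else 0) *\<^sub>R vector [0, 0, 1]" for n
    using assms(2)[of n] by (simp add: octa_pos_at_1 vec_eq_iff forall_3)
  moreover have "(\<lambda>n. octa_pos 0 1 v + (if v = 5 then e n else 0) *\<^sub>R (vector [0, 0, 1] :: real^3))
      \<longlonglongrightarrow> octa_pos 0 1 v + 0 *\<^sub>R vector [0, 0, 1]"
    using assms(1) by (intro tendsto_intros) (cases "v = 5"; simp)
  ultimately show ?thesis
    by simp
qed

theorem theorem1: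
  shows "\<exists>(T :: nat set set) (p :: nat \<Rightarrow> real^3).
     complex2 T \<and> sphere_homeomorphic T \<and> nondegenerate T p \<and> \<not> flexible T p \<and>
     (\<exists>P :: nat \<Rightarrow> nat \<Rightarrow> real^3.
        (\<forall>n. nondegenerate T (P n) \<and> flexible T (P n)) \<and>
        (\<forall>v\<in>verts T. (\<lambda>n. P n v) \<longlonglongrightarrow> p v))"
proof (intro exI[of _ octahedron] exI[of _ "octa_pos 0 1"]
    exI[of _ "\<lambda>n. octa_pos (1 / real (Suc n)) 1"] conjI allI ballI)
  show "complex2 octahedron"
    by (simp add: complex2_def octahedron_def)
  show "sphere_homeomorphic octahedron"
    by (rule octahedron_sphere_homeomorphic)
  show "nondegenerate octahedron (octa_pos 0 1)"
    by (simp add: nondegenerate_octa_pos_1)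
  show "\<not> flexible octahedron (octa_pos 0 1)"
    by (rule octa_limit_not_flexible)
  fix n :: nat
  show "nondegenerate octahedron (octa_pos (1 / real (Suc n)) 1)"
    by (simp add: nondegenerate_octa_pos_1)
  show "flexible octahedron (octa_pos (1 / real (Suc n)) 1)"
    by (simp add: octa_flexible)
next
  show "(\<lambda>n. octa_pos (1 / real (Suc n)) 1 v) \<longlonglongrightarrow> octa_pos 0 1 v" for v
    using LIMSEQ_Suc[OF lim_const_over_n[of 1]] by (intro octa_pos_tendsto) auto
qed

end
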